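(* In the $n$-node line network described in the context, with rates $\mu_0,\ldots,\mu_{n-1}>0$, there exists $s_0>0$ such that for all $s<s_0$ and each $k\in\{1,\ldots,n\}$, $$\lim_{t\to\infty}\mathbb{E}\left[e^{sx_k(t)}\right]=\prod_{i=0}^{k-1}\frac{\mu_i}{\mu_i-s}.$$
   Context: The line network is the following age process. There are monitors at nodes $1,\ldots,n$ with ages $\mathbf{x}(t)=[x_1(t)\ \cdots\ x_n(t)]$; each age grows at unit rate between events. There are $n$ independent Poisson event processes with rates $\mu_0,\ldots,\mu_{n-1}$. At an event of process $0$, $x_1$ is reset to $0$ and all other ages are unchanged. At an event of process $l\in\{1,\ldots,n-1\}$, $x_{l+1}$ is reset to $x_l$ and all other ages are unchanged. (Equivalently, this is the age process of a line of preemptive memoryless $\cdot$/M/1/1 servers with service rates $\mu_1,\ldots,\mu_{n-1}$ fed by a rate-$\mu_0$ Poisson source of fresh updates.) *)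

theory Defs
  imports "HOL-Probability.Probability"
begin

text \<open>Sample point: omega l is the stream of i.i.d. Exp(mu l)
  inter-event times of Poisson process l (l < n). Monitor 0 is the source
  (age constantly 0); monitors 1..n are the ones of the paper.\<close>

definition line_M :: "nat \<Rightarrow> (nat \<Rightarrow> real) \<Rightarrow> (nat \<Rightarrow> real stream) measure" where
  "line_M n \<mu> = (\<Pi>\<^sub>M l\<in>{..<n}. stream_space (density lborel (exponential_density (\<mu> l))))"

definition line_evt :: "(nat \<Rightarrow> real stream) \<Rightarrow> nat \<Rightarrow> nat \<Rightarrow> real" where
  "line_evt \<omega> l j = (\<Sum>i\<le>j. \<omega> l !! i)"

text \<open>Age of monitor k at time t, given initial ages x0. With incl = True this
  is x_k(t) (events at times \<le> t counted); with incl = False it is the left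
  limit x_k(t-) (events at times < t). An event of process k at time tau sets
  x_(k+1) to x_k(tau-).\<close>
fun line_age :: "(nat \<Rightarrow> real stream) \<Rightarrow> (nat \<Rightarrow> real) \<Rightarrow> bool \<Rightarrow> nat \<Rightarrow> real \<Rightarrow> real" where
  "line_age \<omega> x0 incl 0 t = 0"
| "line_age \<omega> x0 incl (Suc k) t =
     (let N = card {j. line_evt \<omega> k j < t \<or> (incl \<and> line_evt \<omega> k j = t)} in
      if N = 0 then x0 (Suc k) + t
      else (let \<tau> = line_evt \<omega> k (N - 1) in line_age \<omega> x0 False k \<tau> + (t - \<tau>)))"

end

theory Submission
  imports Defs
begin

text \<open>
  Write F_k(t) for E e^(s x_k(t)). Monitor k+1 was last reset at the last event tau <= t of
  process k, when it copied x_k(tau-). Process k is independent of the processes before it, and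
  the last event before t of a rate-mu Poisson process is absent with probability e^(-mu t) and
  otherwise has density mu e^(-mu (t - tau)) on [0, t] (the Erlang densities of the successive
  event times add up to mu). Hence
    F_(k+1)(t) = e^(s (x_(k+1)(0) + t) - mu_k t) + int_0^t mu_k e^(-(mu_k - s) u) F_k((t - u)-) du.
  For s < mu_k the kernel is integrable, so by dominated convergence a bounded F_k tending to L
  yields a bounded F_(k+1) tending to L mu_k / (mu_k - s). Induction on k, starting from the
  source with age 0, gives the product.
\<close>

section \<open>Arrival times\<close>

definition arrival_time :: "real stream \<Rightarrow> nat \<Rightarrow> real" where
  "arrival_time \<omega> j = (\<Sum>i\<le>j. \<omega> !! i)"

definition counted :: "bool \<Rightarrow> real \<Rightarrow> real \<Rightarrow> bool" where
  "counted incl a t \<longleftrightarrow> a < t \<or> incl \<and> a = t"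

lemma arrival_time_0 [simp]: "arrival_time \<omega> 0 = shd \<omega>"
  by (simp add: arrival_time_def)

lemma arrival_time_Suc: "arrival_time \<omega> (Suc j) = arrival_time \<omega> j + \<omega> !! Suc j"
  by (simp add: arrival_time_def)

lemma arrival_time_Stream_Suc [simp]: "arrival_time (x ## \<omega>) (Suc j) = x + arrival_time \<omega> j"
  unfolding arrival_time_def by (subst sum.atMost_Suc_shift) simp

lemma counted_add_left: "counted incl (x + a) t \<longleftrightarrow> counted incl a (t - x)"
  by (auto simp: counted_def)

lemma counted_imp_le: "counted incl a t \<Longrightarrow> a \<le> t"
  by (auto simp: counted_def)

lemma counted_less_trans: "counted incl b t \<Longrightarrow> a < b \<Longrightarrow> counted incl a t"
  by (auto simp: counted_def)

lemma strict_mono_arrival_time: "(\<And>i. 0 < \<omega> !! i) \<Longrightarrow> strict_mono (arrival_time \<omega>)"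
  by (simp add: strict_mono_Suc_iff arrival_time_Suc del: snth.simps)

lemma snth_le_arrival_time: "(\<And>i. 0 \<le> \<omega> !! i) \<Longrightarrow> \<omega> !! i \<le> arrival_time \<omega> i"
  unfolding arrival_time_def by (rule member_le_sum) auto

lemma counted_arrivals_eq_lessThan:
  assumes pos: "\<And>i. 0 < \<omega> !! i" and late: "t < \<omega> !! i"
  shows "{j. counted incl (arrival_time \<omega> j) t} = {..<card {j. counted incl (arrival_time \<omega> j) t}}"
proof -
  define S where "S = {j. counted incl (arrival_time \<omega> j) t}"
  have down: "j \<in> S" if "k \<in> S" "j < k" for j k
  proof -
    have "arrival_time \<omega> j < arrival_time \<omega> k"
      using strict_mono_arrival_time[OF pos] \<open>j < k\<close> by (rule strict_monoD)
    then show ?thesis using \<open>k \<in> S\<close> counted_less_trans by (auto simp: S_def)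
  qed
  have "\<omega> !! i \<le> arrival_time \<omega> i"
    using pos by (intro snth_le_arrival_time less_imp_le)
  then have "i \<notin> S"
    using late counted_imp_le by (force simp: S_def)
  define m where "m = (LEAST i. i \<notin> S)"
  have "m \<notin> S" using \<open>i \<notin> S\<close> unfolding m_def by (rule LeastI)
  have "S = {..<m}"
  proof (intro set_eqI iffI)
    show "j \<in> {..<m}" if "j \<in> S" for j
      using that down \<open>m \<notin> S\<close> by (cases "j < m") (auto simp: not_less le_less)
    show "j \<in> S" if "j \<in> {..<m}" for j
      using that not_less_Least[of j "\<lambda>i. i \<notin> S"] by (simp add: m_def)
  qed
  then show ?thesis by (simp add: S_def)
qed

lemma last_arrival_as_suminf:
  fixes c :: ennreal and h :: "real \<Rightarrow> ennreal"
  assumes pos: "\<And>i. 0 < \<omega> !! i" and late: "t < \<omega> !! i"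
  shows "(if card {j. counted incl (arrival_time \<omega> j) t} = 0 then c
          else h (arrival_time \<omega> (card {j. counted incl (arrival_time \<omega> j) t} - 1)))
    = (if counted incl (shd \<omega>) t then 0 else c) +
      (\<Sum>j. if counted incl (arrival_time \<omega> j) t \<and> \<not> counted incl (arrival_time \<omega> (Suc j)) t
           then h (arrival_time \<omega> j) else 0)"
proof -
  define m where "m = card {j. counted incl (arrival_time \<omega> j) t}"
  have "{j. counted incl (arrival_time \<omega> j) t} = {..<m}"
    unfolding m_def by (rule counted_arrivals_eq_lessThan[OF pos late])
  then have S: "counted incl (arrival_time \<omega> j) t \<longleftrightarrow> j < m" for j
    by (simp add: set_eq_iff)
  show ?thesis
  proof (cases m)
    case 0
    then show ?thesis using S[of 0] by (simp add: S m_def[symmetric])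
  next
    case (Suc j0)
    have "(\<Sum>j. if j < m \<and> \<not> Suc j < m then h (arrival_time \<omega> j) else 0)
        = (\<Sum>j\<in>{j0}. if j < m \<and> \<not> Suc j < m then h (arrival_time \<omega> j) else 0)"
      by (rule suminf_finite) (auto simp: Suc)
    then show ?thesis using S[of 0] by (simp add: S m_def[symmetric] Suc)
  qed
qed

lemma measurable_card_Collect_nat:
  assumes [measurable]: "\<And>j. Measurable.pred M (P j)"
  shows "(\<lambda>x. card {j::nat. P j x}) \<in> measurable M (count_space UNIV)"
  unfolding measurable_count_space_eq2_countable
proof safe
  fix a :: nat
  let ?U = "\<Union>F\<in>{F. finite F \<and> card F = a}. {x\<in>space M. {j. P j x} = F}"
  have fin: "{x\<in>space M. {j. P j x} = F} \<in> sets M" for F :: "nat set"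
  proof -
    have "{x\<in>space M. {j. P j x} = F} = {x\<in>space M. \<forall>j. if j \<in> F then P j x else \<not> P j x}"
      by (auto simp: set_eq_iff)
    also have "\<dots> \<in> sets M" by measurable
    finally show ?thesis .
  qed
  have inf: "{x\<in>space M. infinite {j. P j x}} \<in> sets M"
    unfolding infinite_nat_iff_unbounded_le by measurable
  have "countable {F::nat set. finite F \<and> card F = a}"
    by (rule countable_subset[OF _ countable_Collect_finite]) auto
  then have "?U \<in> sets M"
    using fin by (intro sets.countable_UN') auto
  moreover have "(\<lambda>x. card {j. P j x}) -` {a} \<inter> space M =
      ?U \<union> (if a = 0 then {x\<in>space M. infinite {j. P j x}} else {})"
  proof (intro set_eqI iffI)
    fix x assume x: "x \<in> (\<lambda>x. card {j. P j x}) -` {a} \<inter> space M"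
    show "x \<in> ?U \<union> (if a = 0 then {x\<in>space M. infinite {j. P j x}} else {})"
    proof (cases "finite {j. P j x}")
      case True
      then show ?thesis using x by blast
    qed (use x in simp)
  qed (auto split: if_splits)
  ultimately show "(\<lambda>x. card {j. P j x}) -` {a} \<inter> space M \<in> sets M"
    using inf by (simp split: if_splits)
qed simp

lemma measurable_snth_density_lborel [measurable]:
  "(\<lambda>\<omega>. \<omega> !! i) \<in> borel_measurable (stream_space (density lborel f))"
proof -
  have "(\<lambda>\<omega>. \<omega> !! i) \<in> measurable (stream_space (density lborel f)) (density lborel f)"
    by (rule measurable_snth)
  then show ?thesis
    by (simp add: measurable_cong_sets[OF refl sets_density[THEN trans, OF sets_lborel]])
qed

lemma measurable_arrival_time [measurable]:
  "(\<lambda>\<omega>. arrival_time \<omega> j) \<in> borel_measurable (stream_space (density lborel f))"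
  unfolding arrival_time_def by measurable

lemma pred_counted [measurable]:
  assumes [measurable]: "f \<in> borel_measurable M" "g \<in> borel_measurable M"
  shows "Measurable.pred M (\<lambda>x. counted incl (f x) (g x))"
  unfolding counted_def by measurable

section \<open>The last arrival of a Poisson process before a given time\<close>

lemma erlang_density_sums:
  assumes "0 \<le> \<tau>"
  shows "(\<lambda>j. erlang_density j \<mu> \<tau>) sums \<mu>"
proof -
  have "(\<lambda>j. (\<mu> * exp (- \<mu> * \<tau>)) * ((\<mu> * \<tau>) ^ j /\<^sub>R fact j)) sums ((\<mu> * exp (- \<mu> * \<tau>)) * exp (\<mu> * \<tau>))"
    by (intro sums_mult exp_converges)
  moreover have "(\<mu> * exp (- \<mu> * \<tau>)) * exp (\<mu> * \<tau>) = \<mu>"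
    by (simp add: exp_minus field_simps)
  moreover have "(\<mu> * exp (- \<mu> * \<tau>)) * ((\<mu> * \<tau>) ^ j /\<^sub>R fact j) = erlang_density j \<mu> \<tau>" for j
    using assms by (simp add: erlang_density_def power_mult_distrib field_simps)
  ultimately show ?thesis by (simp only:)
qed

lemma nn_integral_erlang_convolution:
  assumes "0 < \<mu>" and [measurable]: "g \<in> borel_measurable borel"
  shows "(\<integral>\<^sup>+x. ennreal (exponential_density \<mu> x) *
            (\<integral>\<^sup>+\<sigma>. ennreal (erlang_density j \<mu> (\<sigma> - x)) * g \<sigma> \<partial>lborel) \<partial>lborel)
       = (\<integral>\<^sup>+\<sigma>. ennreal (erlang_density (Suc j) \<mu> \<sigma>) * g \<sigma> \<partial>lborel)"
proof -
  have "(\<integral>\<^sup>+x. ennreal (exponential_density \<mu> x) *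
            (\<integral>\<^sup>+\<sigma>. ennreal (erlang_density j \<mu> (\<sigma> - x)) * g \<sigma> \<partial>lborel) \<partial>lborel)
      = (\<integral>\<^sup>+x. (\<integral>\<^sup>+\<sigma>. ennreal (erlang_density j \<mu> (\<sigma> - x)) * ennreal (exponential_density \<mu> x) * g \<sigma> \<partial>lborel) \<partial>lborel)"
    by (intro nn_integral_cong, subst nn_integral_cmult[symmetric]) (simp_all add: ac_simps)
  also have "\<dots> = (\<integral>\<^sup>+\<sigma>. (\<integral>\<^sup>+x. ennreal (erlang_density j \<mu> (\<sigma> - x)) * ennreal (exponential_density \<mu> x) * g \<sigma> \<partial>lborel) \<partial>lborel)"
    by (rule lborel_pair.Fubini'[symmetric]) simp
  also have "\<dots> = (\<integral>\<^sup>+\<sigma>. (\<integral>\<^sup>+x. ennreal (erlang_density j \<mu> (\<sigma> - x)) * ennreal (exponential_density \<mu> x) \<partial>lborel) * g \<sigma> \<partial>lborel)"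
    by (intro nn_integral_cong nn_integral_multc) simp
  also have "\<dots> = (\<integral>\<^sup>+\<sigma>. ennreal (erlang_density (Suc j) \<mu> \<sigma>) * g \<sigma> \<partial>lborel)"
    using convolution_erlang_density[OF assms(1), of j 0] by (simp add: fun_eq_iff)
  finally show ?thesis .
qed

locale exponential_stream =
  fixes \<mu> :: real
  assumes rate_pos: "0 < \<mu>"
begin

abbreviation "E \<equiv> density lborel (exponential_density \<mu>)"
abbreviation "P \<equiv> stream_space E"

sublocale prob_space E
  using prob_space_exponential_density[OF rate_pos] .

lemma prob_space_P: "prob_space P"
  by (rule prob_space_stream_space)

lemma nn_integral_shd:
  assumes [measurable]: "g \<in> borel_measurable borel"
  shows "(\<integral>\<^sup>+\<omega>. g (shd \<omega>) \<partial>P) = (\<integral>\<^sup>+y. g y \<partial>E)"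
  by (subst nn_integral_stream_space) (simp_all add: prob_space.emeasure_space_1[OF prob_space_P])

lemma nn_integral_first_not_counted:
  assumes r: "0 \<le> r"
  shows "(\<integral>\<^sup>+\<omega>. indicator {y. \<not> counted incl y r} (shd \<omega>) \<partial>P) = ennreal (exp (- \<mu> * r))"
proof -
  have "AE y in E. y \<noteq> r"
    by (subst AE_density) (use AE_lborel_singleton[of r] in \<open>auto elim: AE_mp\<close>)
  then have "(\<integral>\<^sup>+y. indicator {y. \<not> counted incl y r} y \<partial>E) = (\<integral>\<^sup>+y. indicator {r<..} y \<partial>E)"
    by (intro nn_integral_cong_AE) (auto simp: counted_def split: split_indicator elim: AE_mp)
  also have "\<dots> = emeasure E (space E - {..r})"
    by (simp add: Compl_eq_Diff_UNIV[symmetric] Compl_atMost)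
  also have "\<dots> = emeasure E (space E) - emeasure E {..r}"
    by (rule emeasure_compl) (simp_all add: emeasure_finite)
  also have "emeasure E {..r} = ennreal (1 - exp (- \<mu> * r))"
    using emeasure_erlang_density[OF rate_pos, of 0 r] r by (simp add: erlang_CDF_def)
  also have "emeasure E (space E) = ennreal 1"
    using emeasure_space_1 by simp
  also have "ennreal 1 - ennreal (1 - exp (- \<mu> * r)) = ennreal (exp (- \<mu> * r))"
    using rate_pos r by (subst ennreal_minus) (auto intro: mult_nonneg_nonneg)
  finally show ?thesis
    by (subst nn_integral_shd) simp_all
qed

lemma AE_snth_pos: "AE \<omega> in P. \<forall>i. 0 < \<omega> !! i"
proof -
  have "AE x in E. 0 < x"
    by (subst AE_density)
       (use AE_lborel_singleton[of 0] in \<open>auto simp: erlang_density_def elim: AE_mp\<close>)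
  then have "AE \<omega> in P. stream_all (\<lambda>x. 0 < x) \<omega>"
    by (intro AE_stream_all) simp_all
  then show ?thesis
    by eventually_elim (simp add: sset_range)
qed

lemma emeasure_all_snth_le:
  "emeasure P {\<omega>\<in>space P. \<forall>i<j. \<omega> !! i \<le> t} = emeasure E {..t} ^ j"
proof (induction j)
  case 0
  show ?case using prob_space.emeasure_space_1[OF prob_space_P] by simp
next
  case (Suc j)
  have "emeasure P {\<omega>\<in>space P. \<forall>i<Suc j. \<omega> !! i \<le> t}
      = (\<integral>\<^sup>+y. emeasure P {x\<in>space P. y ## x \<in> {\<omega>\<in>space P. \<forall>i<Suc j. \<omega> !! i \<le> t}} \<partial>E)"
    by (rule emeasure_stream_space) measurable
  also have "\<dots> = (\<integral>\<^sup>+y. emeasure P {\<omega>\<in>space P. \<forall>i<j. \<omega> !! i \<le> t} * indicator {..t} y \<partial>E)"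
    by (intro nn_integral_cong)
       (auto simp: space_stream_space streams_UNIV All_less_Suc2 split: split_indicator)
  also have "\<dots> = emeasure P {\<omega>\<in>space P. \<forall>i<j. \<omega> !! i \<le> t} * emeasure E {..t}"
    by (subst nn_integral_cmult_indicator) simp_all
  finally show ?case using Suc.IH by (simp add: mult.commute)
qed

lemma AE_exists_snth_gt:
  assumes t: "0 \<le> t"
  shows "AE \<omega> in P. \<exists>i. t < \<omega> !! i"
proof (rule AE_I)
  let ?N = "{\<omega>\<in>space P. \<forall>i. \<omega> !! i \<le> t}"
  show "{\<omega> \<in> space P. \<not> (\<exists>i. t < \<omega> !! i)} \<subseteq> ?N" by (auto simp: not_less)
  show "?N \<in> sets P" by measurable
  define q where "q = 1 - exp (- \<mu> * t)"
  have q: "0 \<le> q" "q < 1"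
    using rate_pos t unfolding q_def by (auto intro: mult_nonneg_nonneg)
  have "emeasure E {..t} = ennreal q"
    using emeasure_erlang_density[OF rate_pos, of 0 t] t by (simp add: erlang_CDF_def q_def)
  then have le: "emeasure P ?N \<le> ennreal (q ^ j)" for j
    using emeasure_mono[of ?N "{\<omega>\<in>space P. \<forall>i<j. \<omega> !! i \<le> t}" P] q
    by (auto simp: emeasure_all_snth_le ennreal_power)
  have "(\<lambda>j. ennreal (q ^ j)) \<longlonglongrightarrow> ennreal 0"
    using q by (intro tendsto_ennrealI LIMSEQ_power_zero) simp
  then have "emeasure P ?N \<le> 0"
    using le by (intro LIMSEQ_le_const[of "\<lambda>j. ennreal (q ^ j)"]) auto
  then show "emeasure P ?N = 0" by simp
qed

definition last_arrival_integral :: "bool \<Rightarrow> nat \<Rightarrow> (real \<Rightarrow> ennreal) \<Rightarrow> real \<Rightarrow> ennreal" where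
  "last_arrival_integral incl j h t =
     (\<integral>\<^sup>+\<omega>. (if counted incl (arrival_time \<omega> j) t \<and> \<not> counted incl (arrival_time \<omega> (Suc j)) t
             then h (arrival_time \<omega> j) else 0) \<partial>P)"

lemma last_arrival_integral_0:
  assumes [measurable]: "h \<in> borel_measurable borel"
  shows "last_arrival_integral incl 0 h t =
    (\<integral>\<^sup>+\<tau>. ennreal (exponential_density \<mu> \<tau>) * h \<tau> * ennreal (exp (- \<mu> * (t - \<tau>))) * indicator {..t} \<tau> \<partial>lborel)"
proof -
  have "last_arrival_integral incl 0 h t =
      (\<integral>\<^sup>+x. (\<integral>\<^sup>+\<omega>. (if counted incl x t \<and> \<not> counted incl (shd \<omega>) (t - x) then h x else 0) \<partial>P) \<partial>E)"
    unfolding last_arrival_integral_def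
    by (subst nn_integral_stream_space) (simp_all add: counted_add_left cong: if_cong)
  also have "\<dots> = (\<integral>\<^sup>+x. h x * ennreal (exp (- \<mu> * (t - x))) * indicator {x. counted incl x t} x \<partial>E)"
  proof (rule nn_integral_cong)
    fix x
    have "(\<integral>\<^sup>+\<omega>. (if counted incl x t \<and> \<not> counted incl (shd \<omega>) (t - x) then h x else 0) \<partial>P)
        = h x * indicator {x. counted incl x t} x * (\<integral>\<^sup>+\<omega>. indicator {y. \<not> counted incl y (t - x)} (shd \<omega>) \<partial>P)"
      by (subst nn_integral_cmult[symmetric]) (auto intro!: nn_integral_cong split: split_indicator)
    then show "(\<integral>\<^sup>+\<omega>. (if counted incl x t \<and> \<not> counted incl (shd \<omega>) (t - x) then h x else 0) \<partial>P)
        = h x * ennreal (exp (- \<mu> * (t - x))) * indicator {x. counted incl x t} x"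
      by (auto simp: nn_integral_first_not_counted dest: counted_imp_le split: split_indicator)
  qed
  also have "\<dots> = (\<integral>\<^sup>+\<tau>. ennreal (exponential_density \<mu> \<tau>) * h \<tau> * ennreal (exp (- \<mu> * (t - \<tau>))) * indicator {..t} \<tau> \<partial>lborel)"
  proof -
    have "AE x in lborel. counted incl x t \<longleftrightarrow> x \<le> t"
      using AE_lborel_singleton[of t] by eventually_elim (auto simp: counted_def)
    then show ?thesis
      by (subst nn_integral_density; simp?) (auto intro!: nn_integral_cong_AE simp: ac_simps split: split_indicator elim: AE_mp)
  qed
  finally show ?thesis .
qed

lemma last_arrival_integral_Suc:
  assumes [measurable]: "h \<in> borel_measurable borel"
  shows "last_arrival_integral incl (Suc j) h t = (\<integral>\<^sup>+x. last_arrival_integral incl j (\<lambda>\<tau>. h (x + \<tau>)) (t - x) \<partial>E)"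
proof -
  have "last_arrival_integral incl (Suc j) h t =
      (\<integral>\<^sup>+x. (\<integral>\<^sup>+\<omega>. (if counted incl (x + arrival_time \<omega> j) t \<and> \<not> counted incl (x + arrival_time \<omega> (Suc j)) t
                      then h (x + arrival_time \<omega> j) else 0) \<partial>P) \<partial>E)"
    unfolding last_arrival_integral_def by (subst nn_integral_stream_space) (simp_all cong: if_cong)
  then show ?thesis
    unfolding last_arrival_integral_def by (simp add: counted_add_left)
qed

lemma last_arrival_integral_erlang:
  assumes "h \<in> borel_measurable borel"
  shows "last_arrival_integral incl j h t =
    (\<integral>\<^sup>+\<tau>. ennreal (erlang_density j \<mu> \<tau>) * h \<tau> * ennreal (exp (- \<mu> * (t - \<tau>))) * indicator {..t} \<tau> \<partial>lborel)"
  using assms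
proof (induction j arbitrary: h t)
  case 0
  then show ?case by (rule last_arrival_integral_0)
next
  case (Suc j)
  note [measurable] = Suc.prems
  let ?g = "\<lambda>\<sigma>. h \<sigma> * ennreal (exp (- \<mu> * (t - \<sigma>))) * indicator {..t} \<sigma>"
  have "last_arrival_integral incl (Suc j) h t = (\<integral>\<^sup>+x. last_arrival_integral incl j (\<lambda>\<tau>. h (x + \<tau>)) (t - x) \<partial>E)"
    by (rule last_arrival_integral_Suc) measurable
  also have "\<dots> = (\<integral>\<^sup>+x. (\<integral>\<^sup>+\<sigma>. ennreal (erlang_density j \<mu> (\<sigma> - x)) * ?g \<sigma> \<partial>lborel) \<partial>E)"
  proof (intro nn_integral_cong)
    fix x :: real
    have "(\<integral>\<^sup>+\<tau>. ennreal (erlang_density j \<mu> \<tau>) * h (x + \<tau>) * ennreal (exp (- \<mu> * (t - x - \<tau>))) * indicator {..t - x} \<tau> \<partial>lborel)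
      = (\<integral>\<^sup>+\<sigma>. ennreal (erlang_density j \<mu> (\<sigma> - x)) * ?g \<sigma> \<partial>lborel)"
      by (subst nn_integral_real_affine[where c = 1 and t = "- x"])
         (auto intro!: nn_integral_cong simp: ac_simps split: split_indicator)
    then show "last_arrival_integral incl j (\<lambda>\<tau>. h (x + \<tau>)) (t - x) = (\<integral>\<^sup>+\<sigma>. ennreal (erlang_density j \<mu> (\<sigma> - x)) * ?g \<sigma> \<partial>lborel)"
      by (subst Suc.IH) simp_all
  qed
  also have "\<dots> = (\<integral>\<^sup>+\<sigma>. ennreal (erlang_density (Suc j) \<mu> \<sigma>) * ?g \<sigma> \<partial>lborel)"
    by (subst nn_integral_density) (simp_all add: nn_integral_erlang_convolution[OF rate_pos])
  finally show ?case by (simp add: ac_simps)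
qed

lemma suminf_erlang_density:
  "(\<Sum>j. ennreal (erlang_density j \<mu> \<tau>)) = ennreal \<mu> * indicator {0..} \<tau>"
proof (cases "0 \<le> \<tau>")
  case True
  have "(\<Sum>j. ennreal (erlang_density j \<mu> \<tau>)) = ennreal \<mu>"
    by (rule suminf_ennreal_eq[OF _ erlang_density_sums[OF True]]) (use rate_pos in simp)
  then show ?thesis using True by simp
qed (simp add: erlang_density_def)

lemma nn_integral_last_arrival:
  fixes c :: ennreal and h :: "real \<Rightarrow> ennreal"
  assumes [measurable]: "h \<in> borel_measurable borel" and t: "0 \<le> t"
  shows "(\<integral>\<^sup>+\<omega>. (if card {j. counted incl (arrival_time \<omega> j) t} = 0 then c
                 else h (arrival_time \<omega> (card {j. counted incl (arrival_time \<omega> j) t} - 1))) \<partial>P)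
     = c * ennreal (exp (- \<mu> * t)) + (\<integral>\<^sup>+\<tau>. ennreal (\<mu> * exp (- \<mu> * (t - \<tau>))) * h \<tau> * indicator {0..t} \<tau> \<partial>lborel)"
proof -
  let ?F = "\<lambda>j \<omega>. if counted incl (arrival_time \<omega> j) t \<and> \<not> counted incl (arrival_time \<omega> (Suc j)) t
                   then h (arrival_time \<omega> j) else 0"
  let ?g = "\<lambda>\<tau>. h \<tau> * ennreal (exp (- \<mu> * (t - \<tau>))) * indicator {..t} \<tau>"
  have "(\<integral>\<^sup>+\<omega>. (if card {j. counted incl (arrival_time \<omega> j) t} = 0 then c
                 else h (arrival_time \<omega> (card {j. counted incl (arrival_time \<omega> j) t} - 1))) \<partial>P)
     = (\<integral>\<^sup>+\<omega>. c * indicator {y. \<not> counted incl y t} (shd \<omega>) + (\<Sum>j. ?F j \<omega>) \<partial>P)"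
  proof (rule nn_integral_cong_AE)
    show "AE \<omega> in P. (if card {j. counted incl (arrival_time \<omega> j) t} = 0 then c
                 else h (arrival_time \<omega> (card {j. counted incl (arrival_time \<omega> j) t} - 1)))
        = c * indicator {y. \<not> counted incl y t} (shd \<omega>) + (\<Sum>j. ?F j \<omega>)"
      using AE_snth_pos AE_exists_snth_gt[OF t]
    proof eventually_elim
      case (elim \<omega>)
      then obtain i where "t < \<omega> !! i" by blast
      show ?case
        by (subst last_arrival_as_suminf[OF _ \<open>t < \<omega> !! i\<close>]) (use elim in \<open>simp_all split: split_indicator\<close>)
    qed
  qed
  also have "\<dots> = c * (\<integral>\<^sup>+\<omega>. indicator {y. \<not> counted incl y t} (shd \<omega>) \<partial>P) + (\<Sum>j. (\<integral>\<^sup>+\<omega>. ?F j \<omega> \<partial>P))"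
    by (simp add: nn_integral_add nn_integral_cmult nn_integral_suminf)
  also have "(\<Sum>j. (\<integral>\<^sup>+\<omega>. ?F j \<omega> \<partial>P)) = (\<Sum>j. (\<integral>\<^sup>+\<tau>. ennreal (erlang_density j \<mu> \<tau>) * ?g \<tau> \<partial>lborel))"
    using last_arrival_integral_erlang[of h incl] by (simp add: last_arrival_integral_def mult.assoc)
  also have "\<dots> = (\<integral>\<^sup>+\<tau>. (\<Sum>j. ennreal (erlang_density j \<mu> \<tau>) * ?g \<tau>) \<partial>lborel)"
    by (rule nn_integral_suminf[symmetric]) measurable
  also have "\<dots> = (\<integral>\<^sup>+\<tau>. ennreal (\<mu> * exp (- \<mu> * (t - \<tau>))) * h \<tau> * indicator {0..t} \<tau> \<partial>lborel)"
    using rate_pos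
    by (intro nn_integral_cong)
       (auto simp: ennreal_suminf_multc suminf_erlang_density ennreal_mult ac_simps split: split_indicator)
  finally show ?thesis
    using t by (simp add: nn_integral_first_not_counted)
qed

end

section \<open>Convolution with an exponential kernel\<close>

lemma nn_integral_lborel_reflect:
  fixes g :: "real \<Rightarrow> ennreal"
  assumes "g \<in> borel_measurable borel"
  shows "(\<integral>\<^sup>+\<tau>. g \<tau> \<partial>lborel) = (\<integral>\<^sup>+u. g (t - u) \<partial>lborel)"
  using nn_integral_real_affine[OF assms, of "-1" t] by simp

lemma has_bochner_integral_exp_neg:
  fixes a :: real
  assumes a: "0 < a"
  shows "has_bochner_integral lborel (\<lambda>u. exp (- a * u) * indicator {0..} u) (1 / a)"
proof (rule has_bochner_integral_nn_integral)
  have "(\<integral>\<^sup>+u. ennreal (exp (- a * u) * indicator {0..} u) \<partial>lborel)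
      = (\<integral>\<^sup>+u. ennreal (1 / a) * ennreal (exponential_density a u) \<partial>lborel)"
    using a by (intro nn_integral_cong)
      (auto simp: exponential_density_def ennreal_mult[symmetric] mult.commute split: split_indicator)
  also have "\<dots> = ennreal (1 / a) * emeasure (density lborel (exponential_density a)) UNIV"
    by (simp add: nn_integral_cmult emeasure_density)
  finally show "(\<integral>\<^sup>+u. ennreal (exp (- a * u) * indicator {0..} u) \<partial>lborel) = ennreal (1 / a)"
    using prob_space.emeasure_space_1[OF prob_space_exponential_density[OF a]] by simp
qed (use a in auto)

lemma tendsto_exp_affine_at_top:
  fixes a c :: real
  assumes "0 < a"
  shows "((\<lambda>t. exp (c - a * t)) \<longlongrightarrow> 0) at_top"
proof -
  have "filterlim (\<lambda>t. - c + a * t) at_top at_top"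
    by (intro filterlim_tendsto_add_at_top[OF tendsto_const]
        filterlim_tendsto_pos_mult_at_top[OF tendsto_const assms filterlim_ident])
  then have "filterlim (\<lambda>t. c - a * t) at_bot at_top"
    by (simp add: filterlim_uminus_at_bot algebra_simps)
  then show ?thesis
    by (rule filterlim_compose[OF exp_at_bot])
qed

definition exp_convolution :: "real \<Rightarrow> (real \<Rightarrow> real) \<Rightarrow> real \<Rightarrow> real" where
  "exp_convolution a f t = (\<integral>u. exp (- a * u) * f (t - u) * indicator {0..t} u \<partial>lborel)"

context
  fixes a B :: real and f :: "real \<Rightarrow> real"
  assumes a_pos: "0 < a" and f_measurable [measurable]: "f \<in> borel_measurable borel"
    and f_bounds: "\<And>\<tau>. 0 \<le> \<tau> \<Longrightarrow> 0 \<le> f \<tau> \<and> f \<tau> \<le> B"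
begin

private lemma integrable_exp_neg: "integrable lborel (\<lambda>u. exp (- a * u) * indicator {0..} u)"
  and integral_exp_neg: "(\<integral>u. exp (- a * u) * indicator {0..} u \<partial>lborel) = 1 / a"
  using has_bochner_integral_exp_neg[OF a_pos] by (simp_all add: has_bochner_integral_iff)

private lemma integrable_exp_neg_bound: "integrable lborel (\<lambda>u. B * (exp (- a * u) * indicator {0..} u))"
  using integrable_exp_neg by (rule integrable_mult_right)

private lemma exp_convolution_integrand_bound:
  "\<bar>exp (- a * u) * f (t - u) * indicator {0..t} u\<bar> \<le> B * (exp (- a * u) * indicator {0..} u)"
  using f_bounds[of "t - u"] f_bounds[of 0]
  by (auto simp: abs_mult mult.commute mult_left_mono split: split_indicator)

private lemma exp_convolution_integrand_nonneg: "0 \<le> exp (- a * u) * f (t - u) * indicator {0..t} u"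
  using f_bounds[of "t - u"] by (auto split: split_indicator)

private lemma integrable_exp_convolution_integrand:
  "integrable lborel (\<lambda>u. exp (- a * u) * f (t - u) * indicator {0..t} u)"
proof (rule Bochner_Integration.integrable_bound[OF integrable_exp_neg_bound])
  show "(\<lambda>u. exp (- a * u) * f (t - u) * indicator {0..t} u) \<in> borel_measurable lborel"
    by measurable
  show "AE u in lborel. norm (exp (- a * u) * f (t - u) * indicator {0..t} u)
      \<le> norm (B * (exp (- a * u) * indicator {0..} u))"
    unfolding real_norm_def
    by (rule AE_I2, rule order_trans[OF exp_convolution_integrand_bound abs_ge_self])
qed

lemma exp_convolution_nonneg: "0 \<le> exp_convolution a f t"
  unfolding exp_convolution_def by (intro integral_nonneg_AE AE_I2 exp_convolution_integrand_nonneg)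

lemma exp_convolution_le: "exp_convolution a f t \<le> B / a"
proof -
  have "exp_convolution a f t \<le> (\<integral>u. B * (exp (- a * u) * indicator {0..} u) \<partial>lborel)"
    unfolding exp_convolution_def
    by (rule integral_mono[OF integrable_exp_convolution_integrand integrable_exp_neg_bound])
       (rule order_trans[OF abs_ge_self exp_convolution_integrand_bound])
  also have "\<dots> = B / a"
    using integral_exp_neg by simp
  finally show ?thesis .
qed

lemma nn_integral_exp_convolution:
  "(\<integral>\<^sup>+u. ennreal (exp (- a * u) * f (t - u) * indicator {0..t} u) \<partial>lborel) = ennreal (exp_convolution a f t)"
  unfolding exp_convolution_def
  by (rule nn_integral_eq_integral[OF integrable_exp_convolution_integrand])
     (rule AE_I2, rule exp_convolution_integrand_nonneg)

lemma tendsto_exp_convolution: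
  assumes lim: "(f \<longlongrightarrow> L) at_top"
  shows "(exp_convolution a f \<longlongrightarrow> L / a) at_top"
proof -
  let ?s = "\<lambda>t u. exp (- a * u) * f (t - u) * indicator {0..t} u"
  have "((\<lambda>t. \<integral>u. ?s t u \<partial>lborel) \<longlongrightarrow> (\<integral>u. L * (exp (- a * u) * indicator {0..} u) \<partial>lborel)) at_top"
  proof (rule integral_dominated_convergence_at_top[where w = "\<lambda>u. B * (exp (- a * u) * indicator {0..} u)"])
    show "(\<lambda>u. L * (exp (- a * u) * indicator {0..} u)) \<in> borel_measurable lborel"
      by measurable
    show "?s t \<in> borel_measurable lborel" for t
      by measurable
    show "integrable lborel (\<lambda>u. B * (exp (- a * u) * indicator {0..} u))"
      by (rule integrable_exp_neg_bound)
    show "\<forall>\<^sub>F t in at_top. AE u in lborel. norm (?s t u) \<le> B * (exp (- a * u) * indicator {0..} u)"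
      unfolding real_norm_def
      by (rule always_eventually, rule allI, rule AE_I2, rule exp_convolution_integrand_bound)
    show "AE u in lborel. ((\<lambda>t. ?s t u) \<longlongrightarrow> L * (exp (- a * u) * indicator {0..} u)) at_top"
    proof (rule AE_I2)
      fix u :: real
      show "((\<lambda>t. ?s t u) \<longlongrightarrow> L * (exp (- a * u) * indicator {0..} u)) at_top"
      proof (cases "0 \<le> u")
        case True
        have "filterlim (\<lambda>t. t - u) at_top at_top"
          using filterlim_tendsto_add_at_top[OF tendsto_const[of "- u"] filterlim_ident] by simp
        then have "((\<lambda>t. exp (- a * u) * f (t - u)) \<longlongrightarrow> L * (exp (- a * u) * indicator {0..} u)) at_top"
          using True by (auto intro!: tendsto_mult_left filterlim_compose[OF lim] simp: mult.commute)
        moreover have "\<forall>\<^sub>F t in at_top. exp (- a * u) * f (t - u) = ?s t u"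
          using eventually_ge_at_top[of u] by eventually_elim (use True in simp)
        ultimately show ?thesis
          by (rule Lim_transform_eventually)
      qed simp
    qed
  qed
  then show ?thesis
    using integral_exp_neg by (simp add: exp_convolution_def[abs_def])
qed

end

section \<open>The line network\<close>

lemma line_age_Suc:
  "line_age \<omega> x0 incl (Suc k) t =
     (if card {j. counted incl (arrival_time (\<omega> k) j) t} = 0 then x0 (Suc k) + t
      else line_age \<omega> x0 False k (arrival_time (\<omega> k) (card {j. counted incl (arrival_time (\<omega> k) j) t} - 1))
           + (t - arrival_time (\<omega> k) (card {j. counted incl (arrival_time (\<omega> k) j) t} - 1)))"
  by (simp add: Let_def line_evt_def arrival_time_def counted_def)

lemma line_age_cong:
  "(\<And>l. l < k \<Longrightarrow> \<omega> l = \<omega>' l) \<Longrightarrow> line_age \<omega> x0 incl k t = line_age \<omega>' x0 incl k t"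
proof (induction k arbitrary: incl t)
  case (Suc k)
  have "line_age \<omega> x0 False k \<tau> = line_age \<omega>' x0 False k \<tau>" for \<tau>
    using Suc.prems by (intro Suc.IH) auto
  moreover have "\<omega> k = \<omega>' k" using Suc.prems by simp
  ultimately show ?case by (simp only: line_age_Suc)
qed simp

lemma measurable_line_age:
  assumes "\<And>l i. l < k \<Longrightarrow> (\<lambda>\<omega>. \<omega> l !! i) \<in> borel_measurable N"
  shows "(\<lambda>p. line_age (fst p) x0 incl k (snd p)) \<in> borel_measurable (N \<Otimes>\<^sub>M borel)"
  using assms
proof (induction k arbitrary: incl)
  case (Suc k)
  have [measurable]: "(\<lambda>p. fst p k !! i) \<in> borel_measurable (N \<Otimes>\<^sub>M borel)" for i
    using measurable_compose[OF measurable_fst Suc.prems[of k i]] by simp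
  have [measurable]: "(\<lambda>p. arrival_time (fst p k) j) \<in> borel_measurable (N \<Otimes>\<^sub>M borel)" for j
    unfolding arrival_time_def by measurable
  have IH: "(\<lambda>p. line_age (fst p) x0 False k (snd p)) \<in> borel_measurable (N \<Otimes>\<^sub>M borel)"
    using Suc.prems by (intro Suc.IH) auto
  have count: "(\<lambda>p. card {j. counted incl (arrival_time (fst p k) j) (snd p)})
      \<in> measurable (N \<Otimes>\<^sub>M borel) (count_space UNIV)"
    by (rule measurable_card_Collect_nat) measurable
  have branch: "(\<lambda>p. if m = 0 then x0 (Suc k) + snd p
      else line_age (fst p) x0 False k (arrival_time (fst p k) (m - 1)) + (snd p - arrival_time (fst p k) (m - 1)))
     \<in> borel_measurable (N \<Otimes>\<^sub>M borel)" for m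
  proof -
    have "(\<lambda>p. (fst p, arrival_time (fst p k) (m - 1))) \<in> measurable (N \<Otimes>\<^sub>M borel) (N \<Otimes>\<^sub>M borel)"
      by measurable
    from measurable_compose[OF this IH]
    have [measurable]: "(\<lambda>p. line_age (fst p) x0 False k (arrival_time (fst p k) (m - 1)))
        \<in> borel_measurable (N \<Otimes>\<^sub>M borel)"
      by simp
    show ?thesis by measurable
  qed
  show ?case
    unfolding line_age_Suc by (rule measurable_compose_countable[OF branch count])
qed simp

locale line_network =
  fixes \<mu> :: "nat \<Rightarrow> real" and x0 :: "nat \<Rightarrow> real" and s :: real
  assumes rates_pos: "\<And>l. 0 < \<mu> l"
begin

abbreviation M :: "nat \<Rightarrow> real stream measure" where
  "M l \<equiv> stream_space (density lborel (exponential_density (\<mu> l)))"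

lemma exponential_stream_rate: "exponential_stream (\<mu> l)"
  using rates_pos by unfold_locales

lemma prob_space_M: "prob_space (M l)"
  using exponential_stream.prob_space_P[OF exponential_stream_rate] .

sublocale product_prob_space M
  unfolding product_prob_space_def product_sigma_finite_def product_prob_space_axioms_def
  using prob_space_M by (auto intro: prob_space_imp_sigma_finite)

definition mgf :: "bool \<Rightarrow> nat \<Rightarrow> real \<Rightarrow> ennreal" where
  "mgf incl k t = (\<integral>\<^sup>+\<omega>. ennreal (exp (s * line_age \<omega> x0 incl k t)) \<partial>PiM {..<k} M)"

lemma measurable_line_age_PiM:
  assumes "k \<le> m"
  shows "(\<lambda>p. line_age (fst p) x0 incl k (snd p)) \<in> borel_measurable (PiM {..<m} M \<Otimes>\<^sub>M borel)"
proof (rule measurable_line_age)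
  fix l i assume "l < k"
  then have "(\<lambda>\<omega>. \<omega> l) \<in> measurable (PiM {..<m} M) (M l)"
    using assms by (intro measurable_component_singleton) simp
  then show "(\<lambda>\<omega>. \<omega> l !! i) \<in> borel_measurable (PiM {..<m} M)"
    by measurable
qed

lemma measurable_line_age_at:
  assumes "k \<le> m"
  shows "(\<lambda>\<omega>. line_age \<omega> x0 incl k t) \<in> borel_measurable (PiM {..<m} M)"
proof -
  have "(\<lambda>\<omega>. (\<omega>, t)) \<in> measurable (PiM {..<m} M) (PiM {..<m} M \<Otimes>\<^sub>M borel)"
    by measurable
  from measurable_compose[OF this measurable_line_age_PiM[OF assms]] show ?thesis
    by simp
qed

lemma nn_integral_PiM_line_age:
  assumes "k \<le> m"
  shows "(\<integral>\<^sup>+\<omega>. ennreal (exp (s * line_age \<omega> x0 incl k t)) \<partial>PiM {..<m} M) = mgf incl k t"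
proof -
  have "mgf incl k t = (\<integral>\<^sup>+\<omega>. ennreal (exp (s * line_age \<omega> x0 incl k t))
      \<partial>distr (PiM {..<m} M) (PiM {..<k} M) (\<lambda>\<omega>. restrict \<omega> {..<k}))"
    unfolding mgf_def by (subst distr_restrict[of "{..<k}" "{..<m}"]) (use assms in auto)
  also have "\<dots> = (\<integral>\<^sup>+\<omega>. ennreal (exp (s * line_age (restrict \<omega> {..<k}) x0 incl k t)) \<partial>PiM {..<m} M)"
    using assms measurable_line_age_at[of k k incl t]
    by (intro nn_integral_distr measurable_restrict_subset) auto
  also have "\<dots> = (\<integral>\<^sup>+\<omega>. ennreal (exp (s * line_age \<omega> x0 incl k t)) \<partial>PiM {..<m} M)"
    by (simp only: line_age_cong[of k "restrict _ {..<k}"] restrict_apply' lessThan_iff)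
  finally show ?thesis ..
qed

lemma borel_measurable_mgf: "(\<lambda>\<tau>. mgf incl k \<tau>) \<in> borel_measurable borel"
proof -
  interpret PiM: prob_space "PiM {..<k} M"
    by (rule prob_space_PiM) (rule prob_space_M)
  have "(\<lambda>p. (snd p, fst p)) \<in> measurable (borel \<Otimes>\<^sub>M PiM {..<k} M) (PiM {..<k} M \<Otimes>\<^sub>M borel)"
    by measurable
  from measurable_compose[OF this measurable_line_age_PiM[of k k incl]]
  have "(\<lambda>p. line_age (snd p) x0 incl k (fst p)) \<in> borel_measurable (borel \<Otimes>\<^sub>M PiM {..<k} M)"
    by simp
  then have "(\<lambda>(\<tau>, \<omega>). ennreal (exp (s * line_age \<omega> x0 incl k \<tau>))) \<in> borel_measurable (borel \<Otimes>\<^sub>M PiM {..<k} M)"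
    unfolding case_prod_beta by measurable
  then show ?thesis
    unfolding mgf_def by (rule PiM.borel_measurable_nn_integral)
qed

lemma nn_integral_line_age_Suc_given:
  "(\<integral>\<^sup>+x. ennreal (exp (s * line_age (x(k := y)) x0 incl (Suc k) t)) \<partial>PiM {..<k} M) =
     (if card {j. counted incl (arrival_time y j) t} = 0 then ennreal (exp (s * (x0 (Suc k) + t)))
      else mgf False k (arrival_time y (card {j. counted incl (arrival_time y j) t} - 1))
           * ennreal (exp (s * (t - arrival_time y (card {j. counted incl (arrival_time y j) t} - 1)))))"
  (is "_ = (if ?N = 0 then _ else _)")
proof (cases "?N = 0")
  case True
  interpret PiM: prob_space "PiM {..<k} M"
    by (rule prob_space_PiM) (rule prob_space_M)
  from True show ?thesis
    by (simp del: line_age.simps add: line_age_Suc PiM.emeasure_space_1)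
next
  case False
  define \<tau> where "\<tau> = arrival_time y (?N - 1)"
  have past: "line_age (x(k := y)) x0 False k \<sigma> = line_age x x0 False k \<sigma>" for x \<sigma>
    by (rule line_age_cong) simp
  have "(\<integral>\<^sup>+x. ennreal (exp (s * line_age (x(k := y)) x0 incl (Suc k) t)) \<partial>PiM {..<k} M)
      = (\<integral>\<^sup>+x. ennreal (exp (s * line_age x x0 False k \<tau>)) * ennreal (exp (s * (t - \<tau>))) \<partial>PiM {..<k} M)"
    using False
    by (intro nn_integral_cong)
       (simp del: line_age.simps add: line_age_Suc past \<tau>_def distrib_left exp_add ennreal_mult)
  also have "\<dots> = mgf False k \<tau> * ennreal (exp (s * (t - \<tau>)))"
    unfolding mgf_def
    by (rule nn_integral_multc) (use measurable_line_age_at[of k k False \<tau>] in measurable)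
  finally show ?thesis using False by (simp add: \<tau>_def)
qed

lemma mgf_Suc:
  assumes t: "0 \<le> t"
  shows "mgf incl (Suc k) t = ennreal (exp (s * (x0 (Suc k) + t))) * ennreal (exp (- \<mu> k * t))
    + (\<integral>\<^sup>+\<tau>. ennreal (\<mu> k * exp (- \<mu> k * (t - \<tau>))) * (mgf False k \<tau> * ennreal (exp (s * (t - \<tau>))))
         * indicator {0..t} \<tau> \<partial>lborel)"
proof -
  have insert: "{..<Suc k} = insert k {..<k}" by auto
  have meas: "(\<lambda>\<omega>. ennreal (exp (s * line_age \<omega> x0 incl (Suc k) t))) \<in> borel_measurable (PiM (insert k {..<k}) M)"
    using measurable_line_age_at[of "Suc k" "Suc k" incl t] unfolding insert by measurable
  have "mgf incl (Suc k) t
      = (\<integral>\<^sup>+y. (\<integral>\<^sup>+x. ennreal (exp (s * line_age (x(k := y)) x0 incl (Suc k) t)) \<partial>PiM {..<k} M) \<partial>M k)"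
    unfolding mgf_def insert by (rule product_nn_integral_insert_rev[OF _ _ meas]) simp_all
  also have "\<dots> = ennreal (exp (s * (x0 (Suc k) + t))) * ennreal (exp (- \<mu> k * t))
      + (\<integral>\<^sup>+\<tau>. ennreal (\<mu> k * exp (- \<mu> k * (t - \<tau>))) * (mgf False k \<tau> * ennreal (exp (s * (t - \<tau>))))
         * indicator {0..t} \<tau> \<partial>lborel)"
    unfolding nn_integral_line_age_Suc_given
    by (rule exponential_stream.nn_integral_last_arrival[OF exponential_stream_rate _ t])
       (use borel_measurable_mgf[of False k] in measurable)
  finally show ?thesis .
qed

lemma mgf_Suc_exp_convolution:
  assumes s: "s < \<mu> k" and f_meas: "f \<in> borel_measurable borel"
    and f_bounds: "\<And>\<tau>. 0 \<le> \<tau> \<Longrightarrow> 0 \<le> f \<tau> \<and> f \<tau> \<le> B"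
    and mgf_f: "\<And>\<tau>. 0 \<le> \<tau> \<Longrightarrow> mgf False k \<tau> = ennreal (f \<tau>)" and t: "0 \<le> t"
  shows "mgf incl (Suc k) t = ennreal (exp (s * x0 (Suc k) - (\<mu> k - s) * t) + \<mu> k * exp_convolution (\<mu> k - s) f t)"
proof -
  define a where "a = \<mu> k - s"
  have a: "0 < a" using s by (simp add: a_def)
  note conv_facts = nn_integral_exp_convolution[OF a f_meas f_bounds]
    exp_convolution_nonneg[OF a f_meas f_bounds]
  have "(\<integral>\<^sup>+\<tau>. ennreal (\<mu> k * exp (- \<mu> k * (t - \<tau>))) * (mgf False k \<tau> * ennreal (exp (s * (t - \<tau>))))
          * indicator {0..t} \<tau> \<partial>lborel)
      = (\<integral>\<^sup>+u. ennreal (\<mu> k * exp (- \<mu> k * (t - (t - u)))) * (mgf False k (t - u) * ennreal (exp (s * (t - (t - u)))))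
          * indicator {0..t} (t - u) \<partial>lborel)"
    by (rule nn_integral_lborel_reflect) (use borel_measurable_mgf[of False k] in measurable)
  also have "\<dots> = (\<integral>\<^sup>+u. ennreal (\<mu> k) * ennreal (exp (- a * u) * f (t - u) * indicator {0..t} u) \<partial>lborel)"
  proof (rule nn_integral_cong)
    fix u :: real
    have "exp (- \<mu> k * u) * exp (s * u) = exp (- a * u)"
      by (simp add: a_def exp_add[symmetric] algebra_simps)
    then show "ennreal (\<mu> k * exp (- \<mu> k * (t - (t - u)))) * (mgf False k (t - u) * ennreal (exp (s * (t - (t - u)))))
          * indicator {0..t} (t - u)
        = ennreal (\<mu> k) * ennreal (exp (- a * u) * f (t - u) * indicator {0..t} u)"
      using rates_pos[of k] f_bounds[of "t - u"]
      by (auto simp: mgf_f ennreal_mult[symmetric] mult_ac split: split_indicator)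
  qed
  also have "\<dots> = ennreal (\<mu> k * exp_convolution a f t)"
    using f_meas conv_facts rates_pos[of k, THEN less_imp_le]
    by (subst nn_integral_cmult, measurable) (simp add: ennreal_mult)
  finally have conv: "(\<integral>\<^sup>+\<tau>. ennreal (\<mu> k * exp (- \<mu> k * (t - \<tau>))) * (mgf False k \<tau> * ennreal (exp (s * (t - \<tau>))))
          * indicator {0..t} \<tau> \<partial>lborel) = ennreal (\<mu> k * exp_convolution a f t)" .
  have "exp (s * (x0 (Suc k) + t)) * exp (- \<mu> k * t) = exp (s * x0 (Suc k) - a * t)"
    by (simp add: a_def exp_add[symmetric] algebra_simps)
  then have "mgf incl (Suc k) t = ennreal (exp (s * x0 (Suc k) - a * t)) + ennreal (\<mu> k * exp_convolution a f t)"
    using mgf_Suc[OF t, of incl k] conv by (simp add: ennreal_mult[symmetric])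
  then show ?thesis
    using conv_facts(2) rates_pos[of k, THEN less_imp_le] by (simp add: a_def)
qed

lemma mgf_Suc_bounded_tendsto:
  assumes s: "s < \<mu> k" and B: "0 \<le> B" "\<And>\<tau>. 0 \<le> \<tau> \<Longrightarrow> mgf False k \<tau> \<le> ennreal B"
    and lim: "((\<lambda>t. enn2real (mgf False k t)) \<longlongrightarrow> L) at_top"
  shows "0 \<le> \<tau> \<Longrightarrow> mgf incl (Suc k) \<tau> \<le> ennreal (exp (s * x0 (Suc k)) + \<mu> k * B / (\<mu> k - s))"
    and "((\<lambda>t. enn2real (mgf incl (Suc k) t)) \<longlongrightarrow> L * (\<mu> k / (\<mu> k - s))) at_top"
proof -
  define f where "f \<tau> = enn2real (mgf False k \<tau>)" for \<tau>
  define a where "a = \<mu> k - s"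
  have a: "0 < a" using s by (simp add: a_def)
  have f_meas: "f \<in> borel_measurable borel"
    unfolding f_def[abs_def] by (rule borel_measurable_enn2real[OF borel_measurable_mgf])
  have f_bounds: "0 \<le> f \<tau> \<and> f \<tau> \<le> B" if "0 \<le> \<tau>" for \<tau>
    using B(2)[OF that] B(1) by (simp add: f_def enn2real_leI)
  have mgf_f: "mgf False k \<tau> = ennreal (f \<tau>)" if "0 \<le> \<tau>" for \<tau>
    using le_less_trans[OF B(2)[OF that] ennreal_less_top] by (simp add: f_def ennreal_enn2real)
  define g where "g t = exp (s * x0 (Suc k) - a * t) + \<mu> k * exp_convolution a f t" for t
  have mgf_g: "mgf incl (Suc k) t = ennreal (g t)" if "0 \<le> t" for t
    unfolding g_def a_def by (rule mgf_Suc_exp_convolution[OF s f_meas f_bounds mgf_f that])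
  have g_nonneg: "0 \<le> g t" for t
    unfolding g_def using exp_convolution_nonneg[OF a f_meas f_bounds] rates_pos[of k]
    by (intro add_nonneg_nonneg mult_nonneg_nonneg) simp_all
  show "mgf incl (Suc k) \<tau> \<le> ennreal (exp (s * x0 (Suc k)) + \<mu> k * B / (\<mu> k - s))" if "0 \<le> \<tau>"
  proof -
    have "exp (s * x0 (Suc k) - a * \<tau>) \<le> exp (s * x0 (Suc k))"
      using a that by simp
    moreover have "\<mu> k * exp_convolution a f \<tau> \<le> \<mu> k * B / (\<mu> k - s)"
      using exp_convolution_le[OF a f_meas f_bounds] rates_pos[of k]
      by (simp add: a_def mult_left_mono times_divide_eq_right[symmetric] del: times_divide_eq_right)
    ultimately show ?thesis
      unfolding mgf_g[OF that] g_def by (intro ennreal_leI add_mono)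
  qed
  have "(g \<longlongrightarrow> 0 + \<mu> k * (L / a)) at_top"
    unfolding g_def using tendsto_exp_convolution[OF a f_meas f_bounds] lim
    by (intro tendsto_add tendsto_mult tendsto_const tendsto_exp_affine_at_top a)
       (simp add: f_def[abs_def])
  moreover have "\<forall>\<^sub>F t in at_top. g t = enn2real (mgf incl (Suc k) t)"
    using eventually_ge_at_top[of 0] by eventually_elim (simp add: mgf_g g_nonneg)
  ultimately show "((\<lambda>t. enn2real (mgf incl (Suc k) t)) \<longlongrightarrow> L * (\<mu> k / (\<mu> k - s))) at_top"
    by (auto simp: a_def ac_simps elim: Lim_transform_eventually)
qed

lemma mgf_bounded_tendsto:
  assumes "\<And>l. l < k \<Longrightarrow> s < \<mu> l"
  shows "(\<exists>B\<ge>0. \<forall>incl \<tau>. 0 \<le> \<tau> \<longrightarrow> mgf incl k \<tau> \<le> ennreal B)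
    \<and> (\<forall>incl. ((\<lambda>t. enn2real (mgf incl k t)) \<longlongrightarrow> (\<Prod>i<k. \<mu> i / (\<mu> i - s))) at_top)"
  using assms
proof (induction k)
  case 0
  interpret PiM: prob_space "PiM {..<0} M"
    by (rule prob_space_PiM) (rule prob_space_M)
  have "mgf incl 0 t = 1" for incl t
    unfolding mgf_def using PiM.emeasure_space_1 by simp
  then show ?case by (auto intro!: exI[of _ 1])
next
  case (Suc k)
  then obtain B where "0 \<le> B" "\<And>\<tau>. 0 \<le> \<tau> \<Longrightarrow> mgf False k \<tau> \<le> ennreal B"
    and "((\<lambda>t. enn2real (mgf False k t)) \<longlongrightarrow> (\<Prod>i<k. \<mu> i / (\<mu> i - s))) at_top"
    by auto
  note step = mgf_Suc_bounded_tendsto[OF _ this]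
  have "0 \<le> exp (s * x0 (Suc k)) + \<mu> k * B / (\<mu> k - s)"
    using Suc.prems[of k] rates_pos[of k] \<open>0 \<le> B\<close> by (auto intro!: add_nonneg_nonneg divide_nonneg_nonneg)
  then show ?case
    using step(1) step(2) Suc.prems[of k] by (auto simp: prod.lessThan_Suc)
qed

end

theorem theorem5:
  fixes n :: nat and \<mu> :: "nat \<Rightarrow> real" and x0 :: "nat \<Rightarrow> real"
  assumes "\<forall>i<n. 0 < \<mu> i"
    and "\<forall>k\<in>{1..n}. 0 \<le> x0 k"
  shows "\<exists>s0>0. \<forall>s<s0. \<forall>k\<in>{1..n}.
           ((\<lambda>t. \<integral>\<omega>. exp (s * line_age \<omega> x0 True k t) \<partial>line_M n \<mu>)
              \<longlongrightarrow> (\<Prod>i<k. \<mu> i / (\<mu> i - s))) at_top"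
proof (intro exI conjI allI impI ballI)
  \<comment> \<open>The limit does not depend on the initial ages.\<close>
  \<comment> \<open>Rates beyond n only enlarge the product space; x_1, ..., x_n do not depend on them.\<close>
  define \<mu>' where "\<mu>' l = (if l < n then \<mu> l else 1)" for l
  show "0 < Min (insert 1 (\<mu> ` {..<n}))"
    using assms(1) by simp
  fix s k assume s: "s < Min (insert 1 (\<mu> ` {..<n}))" and k: "k \<in> {1..n}"
  interpret line_network \<mu>' x0 s
    using assms(1) by unfold_locales (simp add: \<mu>'_def)
  have "line_M n \<mu> = PiM {..<n} M"
    unfolding line_M_def by (rule PiM_cong) (simp_all add: \<mu>'_def)
  then have "(\<integral>\<omega>. exp (s * line_age \<omega> x0 True k t) \<partial>line_M n \<mu>) = enn2real (mgf True k t)" for t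
    using k measurable_line_age_at[of k n True t]
    by (simp add: integral_eq_nn_integral nn_integral_PiM_line_age)
  moreover have "(\<Prod>i<k. \<mu> i / (\<mu> i - s)) = (\<Prod>i<k. \<mu>' i / (\<mu>' i - s))"
    using k by (intro prod.cong) (simp_all add: \<mu>'_def)
  moreover have "s < \<mu>' l" if "l < k" for l
    using s k that by (simp add: \<mu>'_def)
  ultimately show "((\<lambda>t. \<integral>\<omega>. exp (s * line_age \<omega> x0 True k t) \<partial>line_M n \<mu>)
      \<longlongrightarrow> (\<Prod>i<k. \<mu> i / (\<mu> i - s))) at_top"
    using mgf_bounded_tendsto by simp
qed

end
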